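(* Let $X$ be a Banach lattice and $E_1,E_2\colon X\to\mathbb R\cup\{+\infty\}$ two proper convex functions such that $E_1\ll_{\mathrm P}E_2$. Then $E_2^*\ll_{\mathrm Q}E_1^*$. In particular, if $E\colon X\to\mathbb R\cup\{+\infty\}$ is a submodular proper convex function, then $E^*$ is substitutable.
   Context: A Banach lattice is a Banach space with a lattice partial order (inf/sup $\wedge,\vee$) compatible with addition and nonnegative scaling and with $|\phi_1|\leq|\phi_2|\Rightarrow\|\phi_1\|\leq\|\phi_2\|$ ($\phi^+=\phi\vee0$, $\phi^-=-(\phi\wedge0)$, $|\phi|=\phi^++\phi^-$). $X^*$ carries the dual order ($\mu\leq\nu$ iff $\langle\mu,\phi\rangle\leq\langle\nu,\phi\rangle$ for all $\phi\geq0$), making it a Banach lattice; $[a,b]=\{m:a\leq m\leq b\}$. $E^*(\mu)=\sup_{\phi\in X}\langle\mu,\phi\rangle-E(\phi)$. $E_1\ll_{\mathrm P}E_2$ means $E_1(\phi_1\wedge\phi_2)+E_2(\phi_1\vee\phi_2)\leq E_1(\phi_1)+E_2(\phi_2)$ for all $\phi_1,\phi_2$; $E$ is submodular if $E\ll_{\mathrm P}E$. For $F_1,F_2\colon X^*\to\mathbb R\cup\{+\infty\}$, $F_2\ll_{\mathrm Q}F_1$ means: for all $\mu_1,\mu_2\in X^*$ and every $t_{21}\in[0,(\mu_2-\mu_1)^+]$ there exists $t_{12}\in[0,(\mu_1-\mu_2)^+]$ with $F_1(\mu_1+t_{21}-t_{12})+F_2(\mu_2-t_{21}+t_{12})\leq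 F_1(\mu_1)+F_2(\mu_2)$; $F$ is substitutable if $F\ll_{\mathrm Q}F$. *)

theory Defs
  imports "HOL-Analysis.Analysis"
begin

text \<open>Banach lattice: a Banach space whose order is a lattice order compatible with
  addition and nonnegative scaling (type classes banach, lattice, ordered_real_vector
  share one order), with the norm monotone in the modulus.\<close>

definition pos_part :: "'a::{lattice,ab_group_add} \<Rightarrow> 'a" where
  "pos_part x = sup x 0"

definition neg_part :: "'a::{lattice,ab_group_add} \<Rightarrow> 'a" where
  "neg_part x = - inf x 0"

definition lat_abs :: "'a::{lattice,ab_group_add} \<Rightarrow> 'a" where
  "lat_abs x = pos_part x + neg_part x"

definition banach_lattice :: "'a::{banach,lattice,ordered_real_vector} itself \<Rightarrow> bool" where
  "banach_lattice _ \<longleftrightarrow> (\<forall>x y::'a. lat_abs x \<le> lat_abs y \<longrightarrow> norm x \<le> norm y)"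

definition dual_le :: "('a::{real_normed_vector,order} \<Rightarrow>\<^sub>L real) \<Rightarrow> ('a \<Rightarrow>\<^sub>L real) \<Rightarrow> bool" where
  "dual_le \<mu> \<nu> \<longleftrightarrow> (\<forall>\<phi>. 0 \<le> \<phi> \<longrightarrow> blinfun_apply \<mu> \<phi> \<le> blinfun_apply \<nu> \<phi>)"

definition dual_pos :: "('a::{real_normed_vector,order} \<Rightarrow>\<^sub>L real) \<Rightarrow> ('a \<Rightarrow>\<^sub>L real)" where
  "dual_pos \<mu> = (THE p. dual_le \<mu> p \<and> dual_le 0 p \<and>
      (\<forall>q. dual_le \<mu> q \<and> dual_le 0 q \<longrightarrow> dual_le p q))"

definition proper_fun :: "('b \<Rightarrow> ereal) \<Rightarrow> bool" where
  "proper_fun E \<longleftrightarrow> (\<forall>x. E x \<noteq> -\<infinity>) \<and> (\<exists>x. E x \<noteq> \<infinity>)"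

definition convex_fun :: "('b::real_vector \<Rightarrow> ereal) \<Rightarrow> bool" where
  "convex_fun E \<longleftrightarrow> (\<forall>x y t. 0 < t \<and> t < 1 \<longrightarrow>
      E ((1 - t) *\<^sub>R x + t *\<^sub>R y) \<le> ereal (1 - t) * E x + ereal t * E y)"

definition conj_fun :: "('a::real_normed_vector \<Rightarrow> ereal) \<Rightarrow> ('a \<Rightarrow>\<^sub>L real) \<Rightarrow> ereal" where
  "conj_fun E \<mu> = (SUP \<phi>. ereal (blinfun_apply \<mu> \<phi>) - E \<phi>)"

definition P_rel :: "('a::lattice \<Rightarrow> ereal) \<Rightarrow> ('a \<Rightarrow> ereal) \<Rightarrow> bool" where
  "P_rel E1 E2 \<longleftrightarrow> (\<forall>\<phi>1 \<phi>2. E1 (inf \<phi>1 \<phi>2) + E2 (sup \<phi>1 \<phi>2) \<le> E1 \<phi>1 + E2 \<phi>2)"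

definition submodular :: "('a::lattice \<Rightarrow> ereal) \<Rightarrow> bool" where
  "submodular E \<longleftrightarrow> P_rel E E"

definition Q_rel :: "(('a::{real_normed_vector,order} \<Rightarrow>\<^sub>L real) \<Rightarrow> ereal) \<Rightarrow> (('a \<Rightarrow>\<^sub>L real) \<Rightarrow> ereal) \<Rightarrow> bool" where
  "Q_rel F2 F1 \<longleftrightarrow> (\<forall>\<mu>1 \<mu>2 t21. dual_le 0 t21 \<and> dual_le t21 (dual_pos (\<mu>2 - \<mu>1)) \<longrightarrow>
      (\<exists>t12. dual_le 0 t12 \<and> dual_le t12 (dual_pos (\<mu>1 - \<mu>2)) \<and>
         F1 (\<mu>1 + t21 - t12) + F2 (\<mu>2 - t21 + t12) \<le> F1 \<mu>1 + F2 \<mu>2))"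

definition substitutable :: "(('a::{real_normed_vector,order} \<Rightarrow>\<^sub>L real) \<Rightarrow> ereal) \<Rightarrow> bool" where
  "substitutable F \<longleftrightarrow> Q_rel F F"

end

theory Submission
  imports Defs "HOL-Library.Lattice_Algebras"
begin

(* Fix \<mu>1, \<mu>2 and t21 \<in> [0, (\<mu>2 - \<mu>1)\<^sup>+] with E1*(\<mu>1) + E2*(\<mu>2) = c finite (otherwise
   t12 = 0 works), and put N = (\<mu>1 - \<mu>2)\<^sup>+ and s(z) = N(z\<^sup>+), a sublinear functional.
   For finite points x, y of E1, E2, applying E1 \<ll>_P E2 to x, y, writing x = x \<and> y + (x - y)\<^sup>+
   and x \<or> y = y + (x - y)\<^sup>+, and using t21 \<le> (\<mu>2 - \<mu>1)\<^sup>+ \<le> \<mu>2 - \<mu>1 + N bounds the gain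
     (\<mu>1 + t21)(x) + (\<mu>2 - t21)(y) - E1 x - E2 y - c  \<le>  s(x - y).
   The pairs (x - y, b) with b below the gain form a convex set, so a sandwich form of the
   Hahn-Banach theorem yields a linear t12 \<le> s dominating all gains. Now t12 \<le> s says exactly
   0 \<le> t12 \<le> N (which also makes t12 bounded), and t12 dominating the gains says exactly
   E1*(\<mu>1 + t21 - t12) + E2*(\<mu>2 - t21 + t12) \<le> c.
   Positive parts in X* exist by the Riesz-Kantorovich formula \<mu>\<^sup>+(\<phi>) = sup {\<mu>(\<psi>) | 0 \<le> \<psi> \<le> \<phi>},
   whose additivity on the positive cone rests on the Riesz decomposition property of X. *)

section \<open>Hahn--Banach below a convex function\<close>

definition dominated_linear_graph :: "('a::real_vector \<Rightarrow> real) \<Rightarrow> ('a \<times> real) set \<Rightarrow> bool" where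
  "dominated_linear_graph p G \<longleftrightarrow> subspace G \<and> (\<forall>x a b. (x, a) \<in> G \<longrightarrow> (x, b) \<in> G \<longrightarrow> a = b)
     \<and> (\<forall>(x, a) \<in> G. a \<le> p x)"

lemma dominated_linear_graphD:
  assumes "dominated_linear_graph p G"
  shows "subspace G" and "(x, a) \<in> G \<Longrightarrow> (x, b) \<in> G \<Longrightarrow> a = b" and "(x, a) \<in> G \<Longrightarrow> a \<le> p x"
  using assms unfolding dominated_linear_graph_def by auto

lemma dominated_linear_graph_Union_chain:
  assumes C: "C \<in> chains {G. dominated_linear_graph p G}" and "C \<noteq> {}"
  shows "dominated_linear_graph p (\<Union>C)"
proof -
  have graph: "dominated_linear_graph p G" if "G \<in> C" for G
    using C that by (auto simp: chains_def)
  have common: "\<exists>G\<in>C. u \<in> G \<and> u' \<in> G" if "u \<in> \<Union>C" "u' \<in> \<Union>C" for u u'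
    using C that unfolding chains_def chain_subset_def by blast
  have "subspace (\<Union>C)"
    unfolding subspace_def
  proof (intro conjI ballI allI)
    show "0 \<in> \<Union>C"
      using \<open>C \<noteq> {}\<close> graph dominated_linear_graphD(1) by (meson Union_iff ex_in_conv subspace_0)
    show "u + u' \<in> \<Union>C" if "u \<in> \<Union>C" "u' \<in> \<Union>C" for u u'
      using common[OF that] graph dominated_linear_graphD(1) by (meson UnionI subspace_add)
    show "r *\<^sub>R u \<in> \<Union>C" if "u \<in> \<Union>C" for r u
      using that graph dominated_linear_graphD(1) by (meson UnionE UnionI subspace_scale)
  qed
  moreover have "a = b" if "(x, a) \<in> \<Union>C" "(x, b) \<in> \<Union>C" for x a b
    using common[OF that] graph dominated_linear_graphD(2) by blast
  moreover have "a \<le> p x" if "(x, a) \<in> \<Union>C" for x a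
    using that graph dominated_linear_graphD(3) by blast
  ultimately show ?thesis
    unfolding dominated_linear_graph_def by blast
qed

lemma dominated_linear_graph_cross_bound:
  assumes G: "dominated_linear_graph p G" and p: "convex_on UNIV p"
    and wa: "(w, a) \<in> G" "(w', a') \<in> G" and lm: "0 < l" "0 < m"
  shows "(a' - p (w' - m *\<^sub>R z)) / m \<le> (p (w + l *\<^sub>R z) - a) / l"
proof -
  define t where "t = m / (l + m)"
  have t: "0 \<le> t" "t \<le> 1" "1 - t = l / (l + m)"
    using lm by (auto simp: t_def field_simps)
  have comb: "(1 / (l + m)) *\<^sub>R (l *\<^sub>R w' + m *\<^sub>R w)
      = (1 - t) *\<^sub>R (w' - m *\<^sub>R z) + t *\<^sub>R (w + l *\<^sub>R z)"
    using lm by (simp only: t(3)) (simp add: t_def algebra_simps)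
  note G_subspace = dominated_linear_graphD(1)[OF G]
  have "(l *\<^sub>R w', l * a') \<in> G" "(m *\<^sub>R w, m * a) \<in> G"
    using subspace_scale[OF G_subspace wa(2), of l] subspace_scale[OF G_subspace wa(1), of m] by simp_all
  then have "(1 / (l + m)) *\<^sub>R ((l *\<^sub>R w', l * a') + (m *\<^sub>R w, m * a)) \<in> G"
    by (intro subspace_scale[OF G_subspace] subspace_add[OF G_subspace])
  then have "(1 / (l + m)) * (l * a' + m * a) \<le> p ((1 - t) *\<^sub>R (w' - m *\<^sub>R z) + t *\<^sub>R (w + l *\<^sub>R z))"
    unfolding comb[symmetric] using dominated_linear_graphD(3)[OF G] by simp
  also have "\<dots> \<le> (1 - t) * p (w' - m *\<^sub>R z) + t * p (w + l *\<^sub>R z)"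
    using convex_onD[OF p t(1,2)] by simp
  also have "\<dots> = (1 / (l + m)) * (l * p (w' - m *\<^sub>R z) + m * p (w + l *\<^sub>R z))"
    by (simp only: t(3)) (simp add: t_def distrib_left)
  finally have "l * a' + m * a \<le> l * p (w' - m *\<^sub>R z) + m * p (w + l *\<^sub>R z)"
    by (rule mult_left_le_imp_le) (use lm in simp)
  then show ?thesis
    using lm by (simp add: field_simps)
qed

text \<open>The value \<open>c\<close> to assign to a new direction \<open>z\<close>: any number between the two sides of the
  cross bound, here the supremum of the left-hand sides.\<close>

lemma dominated_linear_graph_extension_value:
  assumes G: "dominated_linear_graph p G" and p: "convex_on UNIV p"
  obtains c where "\<And>w a l. (w, a) \<in> G \<Longrightarrow> a + l * c \<le> p (w + l *\<^sub>R z)"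
proof -
  define L where "L = {(a' - p (w' - m *\<^sub>R z)) / m | w' a' m. (w', a') \<in> G \<and> 0 < m}"
  have L_mem: "(a' - p (w' - m *\<^sub>R z)) / m \<in> L" if "(w', a') \<in> G" "0 < m" for w' a' m
    unfolding L_def using that by blast
  have L_le: "c \<le> (p (w + l *\<^sub>R z) - a) / l" if "c \<in> L" "(w, a) \<in> G" "0 < l" for c w a l
    using that dominated_linear_graph_cross_bound[OF G p] unfolding L_def by blast
  have zero: "(0, 0) \<in> G"
    using subspace_0[OF dominated_linear_graphD(1)[OF G]] by (simp add: zero_prod_def)
  have L_ne: "L \<noteq> {}"
    using L_mem[OF zero zero_less_one] by blast
  have "bdd_above L"
    using L_le[OF _ zero zero_less_one] by (rule bdd_aboveI)
  show ?thesis
  proof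
    fix w a and l :: real
    assume wa: "(w, a) \<in> G"
    consider "0 < l" | "l = 0" | "l < 0" by linarith
    then show "a + l * Sup L \<le> p (w + l *\<^sub>R z)"
    proof cases
      case 1
      then have "Sup L \<le> (p (w + l *\<^sub>R z) - a) / l"
        using L_ne L_le[OF _ wa] by (intro cSup_least) auto
      then show ?thesis using 1 by (simp add: field_simps)
    next
      case 2
      then show ?thesis using dominated_linear_graphD(3)[OF G wa] by simp
    next
      case 3
      then have "(a - p (w - (- l) *\<^sub>R z)) / (- l) \<le> Sup L"
        using L_mem[OF wa, of "- l"] \<open>bdd_above L\<close> by (intro cSup_upper) auto
      then show ?thesis using 3 by (simp add: field_simps)
    qed
  qed
qed

lemma line_extension_well_defined:
  assumes G: "subspace G" and functional: "\<And>x a b. (x, a) \<in> G \<Longrightarrow> (x, b) \<in> G \<Longrightarrow> a = b"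
    and z: "\<forall>a. (z, a) \<notin> G"
    and in_G: "(w1, a1) \<in> G" "(w2, a2) \<in> G" and eq: "w1 + l1 *\<^sub>R z = w2 + l2 *\<^sub>R z"
  shows "a1 + l1 * c = a2 + l2 * c"
proof -
  have "l1 = l2"
  proof (rule ccontr)
    assume "l1 \<noteq> l2"
    have "w2 - w1 = (l1 - l2) *\<^sub>R z"
      using eq by (simp add: algebra_simps)
    then have "inverse (l1 - l2) *\<^sub>R (w2 - w1) = z"
      using \<open>l1 \<noteq> l2\<close> by simp
    moreover have "(w2 - w1, a2 - a1) \<in> G"
      using subspace_diff[OF G in_G(2,1)] by simp
    then have "inverse (l1 - l2) *\<^sub>R (w2 - w1, a2 - a1) \<in> G"
      by (rule subspace_scale[OF G])
    ultimately show False
      using z by simp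
  qed
  moreover from this have "a1 = a2"
    using eq functional in_G by simp
  ultimately show ?thesis
    by simp
qed

lemma dominated_linear_graph_extend:
  assumes G: "dominated_linear_graph p G" and p: "convex_on UNIV p" and z: "\<forall>a. (z, a) \<notin> G"
  obtains G' where "dominated_linear_graph p G'" "G \<subset> G'"
proof -
  obtain c where c: "\<And>w a l. (w, a) \<in> G \<Longrightarrow> a + l * c \<le> p (w + l *\<^sub>R z)"
    using dominated_linear_graph_extension_value[OF G p] by blast
  define G' where "G' = {u + v | u v. u \<in> G \<and> v \<in> span {(z, c)}}"
  have G'_iff: "(x, b) \<in> G' \<longleftrightarrow> (\<exists>w a l. (w, a) \<in> G \<and> x = w + l *\<^sub>R z \<and> b = a + l * c)" for x b
    unfolding G'_def span_singleton by force
  note G_subspace = dominated_linear_graphD(1)[OF G]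
  have "a = b" if xa: "(x, a) \<in> G'" and xb: "(x, b) \<in> G'" for x a b
  proof -
    obtain w1 a1 l1 where 1: "(w1, a1) \<in> G" "x = w1 + l1 *\<^sub>R z" "a = a1 + l1 * c"
      using xa unfolding G'_iff by blast
    obtain w2 a2 l2 where 2: "(w2, a2) \<in> G" "x = w2 + l2 *\<^sub>R z" "b = a2 + l2 * c"
      using xb unfolding G'_iff by blast
    show ?thesis
      using line_extension_well_defined[OF G_subspace dominated_linear_graphD(2)[OF G] z 1(1) 2(1)] 1 2
      by simp
  qed
  moreover have "b \<le> p x" if "(x, b) \<in> G'" for x b
    using that c unfolding G'_iff by blast
  moreover have "subspace G'"
    unfolding G'_def by (intro subspace_sums G_subspace subspace_span)
  ultimately have "dominated_linear_graph p G'"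
    unfolding dominated_linear_graph_def by auto
  moreover have "G \<subseteq> G'"
  proof clarify
    fix w a assume "(w, a) \<in> G"
    then show "(w, a) \<in> G'"
      unfolding G'_iff by (intro exI[of _ w] exI[of _ a] exI[of _ 0]) simp
  qed
  moreover have "(z, c) \<in> G'"
    using G'_iff[of z c] subspace_0[OF G_subspace] by (force simp: zero_prod_def)
  ultimately show ?thesis
    using that z by blast
qed

theorem hahn_banach_convex:
  fixes p :: "'a::real_vector \<Rightarrow> real"
  assumes p: "convex_on UNIV p" and "0 \<le> p 0"
  obtains f where "linear f" "\<And>x. f x \<le> p x"
proof -
  have "dominated_linear_graph p {0}"
    using \<open>0 \<le> p 0\<close> subspace_single_0[where 'a = "'a \<times> real"]
    by (auto simp: dominated_linear_graph_def zero_prod_def)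
  then have "\<forall>C \<in> chains {G. dominated_linear_graph p G}.
      \<exists>U \<in> {G. dominated_linear_graph p G}. \<forall>X\<in>C. X \<subseteq> U"
    using dominated_linear_graph_Union_chain by (metis Sup_upper empty_iff mem_Collect_eq)
  then obtain M where "M \<in> {G. dominated_linear_graph p G}"
    and maximal: "\<forall>G \<in> {G. dominated_linear_graph p G}. M \<subseteq> G \<longrightarrow> G = M"
    by (rule Zorn_Lemma2[THEN bexE])
  then have M: "dominated_linear_graph p M"
    by simp
  note M_subspace = dominated_linear_graphD(1)[OF M]
  have "\<exists>a. (x, a) \<in> M" for x
    using dominated_linear_graph_extend[OF M p] maximal by blast
  then have "\<exists>!a. (x, a) \<in> M" for x
    using dominated_linear_graphD(2)[OF M] by blast
  then have f_graph: "(x, THE a. (x, a) \<in> M) \<in> M" for x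
    by (rule theI')
  define f where "f x = (THE a. (x, a) \<in> M)" for x
  have f_eq: "f x = a" if "(x, a) \<in> M" for x a
    using dominated_linear_graphD(2)[OF M that f_graph] by (simp add: f_def)
  have "linear f"
  proof (rule linearI)
    show "f (x + y) = f x + f y" for x y
      using subspace_add[OF M_subspace f_graph f_graph] by (intro f_eq) (simp add: f_def)
    show "f (r *\<^sub>R x) = r *\<^sub>R f x" for r x
      using subspace_scale[OF M_subspace f_graph] by (intro f_eq) (simp add: f_def)
  qed
  moreover have "f x \<le> p x" for x
    using dominated_linear_graphD(3)[OF M f_graph] by (simp add: f_def)
  ultimately show ?thesis by (rule that)
qed

section \<open>The sandwich theorem\<close>

definition sublinear :: "('a::real_vector \<Rightarrow> real) \<Rightarrow> bool" where
  "sublinear s \<longleftrightarrow>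
     (\<forall>x y. s (x + y) \<le> s x + s y) \<and> (\<forall>r x. 0 \<le> r \<longrightarrow> s (r *\<^sub>R x) = r * s x)"

lemma sublinearD:
  assumes "sublinear s"
  shows sublinear_add_le: "s (x + y) \<le> s x + s y"
    and sublinear_scaleR: "0 \<le> r \<Longrightarrow> s (r *\<^sub>R x) = r * s x"
  using assms unfolding sublinear_def by blast+

lemma sublinear_0: "sublinear s \<Longrightarrow> s 0 = 0"
  using sublinear_scaleR[of s 0 0] by simp

lemma sublinear_convex_on: "sublinear s \<Longrightarrow> convex_on UNIV s"
  by (intro convex_onI) (simp_all add: sublinear_add_le sublinear_scaleR order_trans[OF sublinear_add_le])

lemma le_weighted_add_INF:
  fixes f g :: "'b \<Rightarrow> real"
  assumes "A \<noteq> {}" "B \<noteq> {}" "bdd_below (f ` A)" "bdd_below (g ` B)" "0 < \<alpha>" "0 < \<beta>"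
    and le: "\<And>x y. x \<in> A \<Longrightarrow> y \<in> B \<Longrightarrow> X \<le> \<alpha> * f x + \<beta> * g y"
  shows "X \<le> \<alpha> * (INF x\<in>A. f x) + \<beta> * (INF y\<in>B. g y)"
proof -
  have "(X - \<beta> * g y) / \<alpha> \<le> (INF x\<in>A. f x)" if "y \<in> B" for y
    using assms(1,5) le[OF _ that] by (intro cINF_greatest) (auto simp: field_simps)
  then have "(X - \<alpha> * (INF x\<in>A. f x)) / \<beta> \<le> (INF y\<in>B. g y)"
    using assms(2,5,6) by (intro cINF_greatest) (auto simp: field_simps)
  then show ?thesis
    using assms(6) by (simp add: field_simps)
qed

text \<open>Hahn--Banach applied to this convex function separates \<open>K\<close> from the graph of \<open>s\<close>.\<close>

definition gap_inf :: "('a::real_vector \<Rightarrow> real) \<Rightarrow> ('a \<times> real) set \<Rightarrow> 'a \<Rightarrow> real" where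
  "gap_inf s K z = (INF (w, a)\<in>K. s (z + w) - a)"

context
  fixes s :: "'a::real_vector \<Rightarrow> real" and K :: "('a \<times> real) set"
  assumes s: "sublinear s" and K_ne: "K \<noteq> {}" and K_below: "\<And>z a. (z, a) \<in> K \<Longrightarrow> a \<le> s z"
begin

lemma bdd_below_gap:
  "bdd_below ((\<lambda>(w, a). s (z + w) - a) ` K)"
proof (rule bdd_belowI2)
  fix u assume "u \<in> K"
  then obtain w a where u: "u = (w, a)" "(w, a) \<in> K"
    by (cases u) auto
  have "a \<le> s ((z + w) + - z)"
    using K_below u(2) by simp
  then show "- s (- z) \<le> (case u of (w, a) \<Rightarrow> s (z + w) - a)"
    using sublinear_add_le[OF s, of "z + w" "- z"] u(1) by simp
qed

lemma gap_inf_le: "(w, a) \<in> K \<Longrightarrow> gap_inf s K z \<le> s (z + w) - a"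
  unfolding gap_inf_def using bdd_below_gap by (rule cINF_lower2) auto

lemma gap_inf_0_nonneg: "0 \<le> gap_inf s K 0"
  unfolding gap_inf_def using K_ne K_below by (intro cINF_greatest) auto

lemma convex_on_gap_inf:
  assumes "convex K"
  shows "convex_on UNIV (gap_inf s K)"
proof (rule convex_onI)
  fix t :: real and z1 z2 :: 'a
  assume t: "0 < t" "t < 1"
  show "gap_inf s K ((1 - t) *\<^sub>R z1 + t *\<^sub>R z2) \<le> (1 - t) * gap_inf s K z1 + t * gap_inf s K z2"
    unfolding gap_inf_def[of s K z1] gap_inf_def[of s K z2]
  proof (rule le_weighted_add_INF[OF K_ne K_ne bdd_below_gap bdd_below_gap])
    fix u1 u2 assume u: "u1 \<in> K" "u2 \<in> K"
    obtain w1 a1 w2 a2 where u_eq: "u1 = (w1, a1)" "u2 = (w2, a2)" by fastforce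
    have "(1 - t) *\<^sub>R u1 + t *\<^sub>R u2 \<in> K"
      using assms u t by (intro convexD) auto
    then have "((1 - t) *\<^sub>R w1 + t *\<^sub>R w2, (1 - t) * a1 + t * a2) \<in> K"
      by (simp add: u_eq)
    then have "gap_inf s K ((1 - t) *\<^sub>R z1 + t *\<^sub>R z2)
        \<le> s (((1 - t) *\<^sub>R z1 + t *\<^sub>R z2) + ((1 - t) *\<^sub>R w1 + t *\<^sub>R w2)) - ((1 - t) * a1 + t * a2)"
      by (rule gap_inf_le)
    also have "\<dots> = s ((1 - t) *\<^sub>R (z1 + w1) + t *\<^sub>R (z2 + w2)) - ((1 - t) * a1 + t * a2)"
      by (simp add: algebra_simps)
    also have "\<dots> \<le> (1 - t) * (s (z1 + w1) - a1) + t * (s (z2 + w2) - a2)"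
      using convex_onD[OF sublinear_convex_on[OF s], of t "z1 + w1" "z2 + w2"] t
      by (simp add: algebra_simps)
    finally show "gap_inf s K ((1 - t) *\<^sub>R z1 + t *\<^sub>R z2)
        \<le> (1 - t) * (case u1 of (w, a) \<Rightarrow> s (z1 + w) - a) + t * (case u2 of (w, a) \<Rightarrow> s (z2 + w) - a)"
      by (simp add: u_eq)
  qed (use t in auto)
qed simp

lemma sublinear_sandwich:
  assumes "convex K"
  obtains f where "linear f" "\<And>x. f x \<le> s x" "\<And>z a. (z, a) \<in> K \<Longrightarrow> a \<le> f z"
proof -
  obtain f where f: "linear f" "\<And>x. f x \<le> gap_inf s K x"
    using hahn_banach_convex[OF convex_on_gap_inf[OF assms] gap_inf_0_nonneg] by blast
  obtain w0 a0 where w0: "(w0, a0) \<in> K"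
    using K_ne by auto
  have "f x \<le> s x" for x
  proof (rule ccontr)
    assume "\<not> f x \<le> s x"
    define n where "n = (s w0 - a0 + 1) / (f x - s x)"
    have n: "0 < n" "n * (f x - s x) = s w0 - a0 + 1"
      using \<open>\<not> f x \<le> s x\<close> K_below[OF w0] by (auto simp: n_def)
    have "n * f x = f (n *\<^sub>R x)"
      using f(1) by (simp add: linear_scale)
    also have "\<dots> \<le> s (n *\<^sub>R x + w0) - a0"
      using f(2) gap_inf_le[OF w0] order_trans by blast
    also have "\<dots> \<le> n * s x + s w0 - a0"
      using sublinear_add_le[OF s, of "n *\<^sub>R x" w0] sublinear_scaleR[OF s, of n x] n(1) by simp
    finally show False
      using n(2) by (simp add: algebra_simps)
  qed
  moreover have "a \<le> f z" if "(z, a) \<in> K" for z a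
  proof -
    have "- f z = f (- z)"
      using f(1) by (simp add: linear_neg)
    also have "\<dots> \<le> s (- z + z) - a"
      using f(2) gap_inf_le[OF that] order_trans by blast
    finally show ?thesis
      by (simp add: sublinear_0[OF s])
  qed
  ultimately show ?thesis
    using f(1) that by blast
qed

end

section \<open>Positive and negative parts\<close>

text \<open>A type of sort \<open>{lattice, ordered_ab_group_add}\<close> is not automatically an instance of the
  class \<open>lattice_ab_group_add\<close>, so the laws of that class are obtained by interpretation.\<close>

context
begin

interpretation lattice_ab_group_add "(+)" "0::'a::{lattice,ordered_ab_group_add}" "(-)" uminus "(\<le>)" "(<)" inf sup
  by intro_locales

lemma pos_part_nonneg [simp]: "0 \<le> pos_part x"
  for x :: "'a::{lattice,ordered_ab_group_add}"
  by (simp add: pos_part_def)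

lemma neg_part_nonneg [simp]: "0 \<le> neg_part x"
  for x :: "'a::{lattice,ordered_ab_group_add}"
  by (simp add: neg_part_def)

lemma pos_part_eq_self: "0 \<le> x \<Longrightarrow> pos_part x = x"
  for x :: "'a::{lattice,ordered_ab_group_add}"
  by (simp add: pos_part_def sup_absorb1)

lemma pos_part_eq_0: "x \<le> 0 \<Longrightarrow> pos_part x = 0"
  for x :: "'a::{lattice,ordered_ab_group_add}"
  by (simp add: pos_part_def sup_absorb2)

lemma neg_part_eq_0: "0 \<le> x \<Longrightarrow> neg_part x = 0"
  for x :: "'a::{lattice,ordered_ab_group_add}"
  by (simp add: neg_part_def inf_absorb2)

lemma pos_part_minus_neg_part: "pos_part x - neg_part x = x"
  for x :: "'a::{lattice,ordered_ab_group_add}"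
  using add_eq_inf_sup[of x 0] by (simp add: pos_part_def neg_part_def)

lemma diff_inf_eq_pos_part: "x - inf x y = pos_part (x - y)"
  for x :: "'a::{lattice,ordered_ab_group_add}"
  by (simp add: pos_part_def add_sup_distrib_left sup_commute)

lemma sup_eq_add_pos_part: "sup x y = y + pos_part (x - y)"
  for x :: "'a::{lattice,ordered_ab_group_add}"
  by (simp add: pos_part_def add_sup_distrib_left sup_commute)

lemma diff_inf_le_of_le_add: "\<psi> - inf \<psi> \<phi>1 \<le> \<phi>2" if "\<psi> \<le> \<phi>1 + \<phi>2" "0 \<le> \<phi>2"
  for \<psi> :: "'a::{lattice,ordered_ab_group_add}"
proof -
  have "\<psi> \<le> inf (\<phi>2 + \<psi>) (\<phi>2 + \<phi>1)"
    using that by (simp add: add.commute add_increasing)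
  then have "\<psi> \<le> \<phi>2 + inf \<psi> \<phi>1"
    by (simp only: add_inf_distrib_left)
  then show ?thesis
    by (simp only: diff_le_eq)
qed

end

lemma pos_part_add_le: "pos_part (x + y) \<le> pos_part x + pos_part y"
  for x :: "'a::{lattice,ordered_ab_group_add}"
  unfolding pos_part_def by (intro sup_least add_mono) auto

lemma pos_part_scaleR: "0 \<le> r \<Longrightarrow> pos_part (r *\<^sub>R x) = r *\<^sub>R pos_part x"
  for x :: "'a::{lattice,ordered_real_vector}"
proof (cases "r = 0")
  case False
  assume "0 \<le> r"
  with False have r: "0 < r" by simp
  have "sup (r *\<^sub>R x) 0 \<le> r *\<^sub>R sup x 0"
    using r by (intro sup_least) (simp_all add: scaleR_le_cancel_left_pos scaleR_nonneg_nonneg)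
  moreover have "sup x 0 \<le> sup (r *\<^sub>R x) 0 /\<^sub>R r"
    using r by (intro sup_least) (simp_all add: pos_le_divideR_eq)
  then have "r *\<^sub>R sup x 0 \<le> sup (r *\<^sub>R x) 0"
    using pos_le_divideR_eq[OF r] by blast
  ultimately show ?thesis
    unfolding pos_part_def by (rule antisym)
qed (simp add: pos_part_def)

lemma lat_abs_eq_self: "0 \<le> x \<Longrightarrow> lat_abs x = x"
  for x :: "'a::{lattice,ordered_ab_group_add}"
  by (simp add: lat_abs_def pos_part_eq_self neg_part_eq_0)

lemma pos_part_le_lat_abs: "pos_part x \<le> lat_abs x"
  for x :: "'a::{lattice,ordered_ab_group_add}"
  by (simp add: lat_abs_def add_increasing2)

lemma neg_part_le_lat_abs: "neg_part x \<le> lat_abs x"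
  for x :: "'a::{lattice,ordered_ab_group_add}"
  by (simp add: lat_abs_def add_increasing)

definition cone_extension :: "('a::{lattice,ordered_ab_group_add} \<Rightarrow> real) \<Rightarrow> 'a \<Rightarrow> real" where
  "cone_extension q x = q (pos_part x) - q (neg_part x)"

context
  fixes q :: "'a::{lattice,ordered_real_vector} \<Rightarrow> real"
  assumes q_add: "\<And>a b. 0 \<le> a \<Longrightarrow> 0 \<le> b \<Longrightarrow> q (a + b) = q a + q b"
begin

lemma cone_extension_eq:
  assumes "0 \<le> a" "0 \<le> b" "x = a - b"
  shows "cone_extension q x = q a - q b"
proof -
  have "a + neg_part x = pos_part x + b"
    using assms(3) pos_part_minus_neg_part[of x] by (simp add: algebra_simps)
  then have "q a + q (neg_part x) = q (pos_part x) + q b"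
    using assms(1,2) q_add by (metis neg_part_nonneg pos_part_nonneg)
  then show ?thesis
    by (simp add: cone_extension_def)
qed

lemma cone_extension_nonneg_eq: "0 \<le> a \<Longrightarrow> cone_extension q a = q a"
  using cone_extension_eq[of a 0 a] q_add[of 0 0] by simp

lemma linear_cone_extension:
  assumes q_scale: "\<And>r a. 0 \<le> r \<Longrightarrow> 0 \<le> a \<Longrightarrow> q (r *\<^sub>R a) = r * q a"
  shows "linear (cone_extension q)"
proof (rule linearI)
  fix x y :: 'a
  have "cone_extension q (x + y) = q (pos_part x + pos_part y) - q (neg_part x + neg_part y)"
  proof (rule cone_extension_eq)
    show "x + y = pos_part x + pos_part y - (neg_part x + neg_part y)"
      using pos_part_minus_neg_part[of x] pos_part_minus_neg_part[of y] by (simp add: algebra_simps)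
  qed simp_all
  then show "cone_extension q (x + y) = cone_extension q x + cone_extension q y"
    by (simp add: q_add cone_extension_def)
next
  fix r :: real and x :: 'a
  show "cone_extension q (r *\<^sub>R x) = r *\<^sub>R cone_extension q x"
  proof (cases "0 \<le> r")
    case True
    have "cone_extension q (r *\<^sub>R x) = q (r *\<^sub>R pos_part x) - q (r *\<^sub>R neg_part x)"
    proof (rule cone_extension_eq)
      show "r *\<^sub>R x = r *\<^sub>R pos_part x - r *\<^sub>R neg_part x"
        by (metis pos_part_minus_neg_part scaleR_diff_right)
    qed (simp_all add: True scaleR_nonneg_nonneg)
    then show ?thesis
      using True by (simp add: q_scale cone_extension_def right_diff_distrib)
  next
    case False
    have "cone_extension q (r *\<^sub>R x) = q ((- r) *\<^sub>R neg_part x) - q ((- r) *\<^sub>R pos_part x)"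
    proof (rule cone_extension_eq)
      show "r *\<^sub>R x = (- r) *\<^sub>R neg_part x - (- r) *\<^sub>R pos_part x"
        by (metis minus_diff_eq pos_part_minus_neg_part scaleR_diff_right scaleR_minus_left)
    qed (use False in \<open>simp_all add: scaleR_nonpos_nonneg\<close>)
    then show ?thesis
      using False q_scale[of "- r" "neg_part x"] q_scale[of "- r" "pos_part x"]
      by (simp add: cone_extension_def right_diff_distrib)
  qed
qed

end

section \<open>The dual order\<close>

lemma blinfun_apply_Blinfun_of_linear:
  fixes f :: "'a::real_normed_vector \<Rightarrow> real"
  assumes "linear f" and "\<And>x. \<bar>f x\<bar> \<le> K * norm x"
  shows "blinfun_apply (Blinfun f) = f"
proof -
  have "bounded_linear f"
    using assms by (intro bounded_linear.intro bounded_linear_axioms.intro) (auto simp: mult.commute)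
  then show ?thesis
    by (rule bounded_linear_Blinfun_apply)
qed

lemma dual_le_antisym:
  fixes p q :: "'a::{real_normed_vector,lattice,ordered_real_vector} \<Rightarrow>\<^sub>L real"
  assumes "dual_le p q" "dual_le q p"
  shows "p = q"
proof (rule blinfun_eqI)
  fix x :: 'a
  have "blinfun_apply p (pos_part x) = blinfun_apply q (pos_part x)"
    and "blinfun_apply p (neg_part x) = blinfun_apply q (neg_part x)"
    using assms unfolding dual_le_def by (meson antisym pos_part_nonneg neg_part_nonneg)+
  then show "blinfun_apply p x = blinfun_apply q x"
    by (metis blinfun.diff_right pos_part_minus_neg_part)
qed

lemma sublinear_pos_part_functional:
  fixes N :: "'a::{real_normed_vector,lattice,ordered_real_vector} \<Rightarrow>\<^sub>L real"
  assumes "dual_le 0 N"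
  shows "sublinear (\<lambda>x. blinfun_apply N (pos_part x))"
  unfolding sublinear_def
proof (intro conjI allI impI)
  fix x y :: 'a
  have "0 \<le> blinfun_apply N (pos_part x + pos_part y - pos_part (x + y))"
    using assms pos_part_add_le[of x y] unfolding dual_le_def by simp
  then show "blinfun_apply N (pos_part (x + y)) \<le> blinfun_apply N (pos_part x) + blinfun_apply N (pos_part y)"
    by (simp add: blinfun.add_right blinfun.diff_right)
next
  fix r :: real and x :: 'a
  assume "0 \<le> r"
  then show "blinfun_apply N (pos_part (r *\<^sub>R x)) = r * blinfun_apply N (pos_part x)"
    by (simp add: pos_part_scaleR blinfun.scaleR_right)
qed

definition riesz_kantorovich :: "('a::{real_normed_vector,order} \<Rightarrow>\<^sub>L real) \<Rightarrow> 'a \<Rightarrow> real" where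
  "riesz_kantorovich \<delta> \<phi> = (SUP \<psi>\<in>{0..\<phi>}. blinfun_apply \<delta> \<psi>)"

section \<open>Conjugates\<close>

lemma proper_fun_neq_MInf: "proper_fun E \<Longrightarrow> E x \<noteq> -\<infinity>"
  unfolding proper_fun_def by blast

lemma proper_fun_finite_value:
  assumes "proper_fun E"
  obtains x v where "E x = ereal v"
proof -
  obtain x where "E x \<noteq> \<infinity>"
    using assms unfolding proper_fun_def by blast
  with proper_fun_neq_MInf[OF assms, of x] that show ?thesis
    by (cases "E x") auto
qed

lemma convex_fun_finite_combination:
  assumes "proper_fun E" "convex_fun E" "E x = ereal a" "E y = ereal b" "0 \<le> t" "t \<le> 1"
  obtains v where "E ((1 - t) *\<^sub>R x + t *\<^sub>R y) = ereal v" "v \<le> (1 - t) * a + t * b"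
proof -
  consider "t = 0" | "t = 1" | "0 < t" "t < 1"
    using assms(5,6) by fastforce
  then have "E ((1 - t) *\<^sub>R x + t *\<^sub>R y) \<le> ereal ((1 - t) * a + t * b)"
  proof cases
    case 3
    then have "E ((1 - t) *\<^sub>R x + t *\<^sub>R y) \<le> ereal (1 - t) * E x + ereal t * E y"
      using assms(2) unfolding convex_fun_def by blast
    then show ?thesis
      using assms(3,4) by simp
  qed (use assms(3,4) in simp_all)
  moreover have "E ((1 - t) *\<^sub>R x + t *\<^sub>R y) \<noteq> -\<infinity>"
    using assms(1) by (rule proper_fun_neq_MInf)
  ultimately show ?thesis
    using that by (cases "E ((1 - t) *\<^sub>R x + t *\<^sub>R y)") auto
qed

lemma conj_fun_ge:
  assumes "E x = ereal v"
  shows "ereal (blinfun_apply \<mu> x - v) \<le> conj_fun E \<mu>"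
proof -
  have "ereal (blinfun_apply \<mu> x) - E x \<le> conj_fun E \<mu>"
    unfolding conj_fun_def by (rule SUP_upper) simp
  then show ?thesis
    using assms by simp
qed

lemma conj_fun_le:
  assumes "\<And>x v. E x = ereal v \<Longrightarrow> blinfun_apply \<mu> x - v \<le> M" and "\<And>x. E x \<noteq> -\<infinity>"
  shows "conj_fun E \<mu> \<le> ereal M"
  unfolding conj_fun_def
proof (rule SUP_least)
  fix x
  show "ereal (blinfun_apply \<mu> x) - E x \<le> ereal M"
    using assms(1)[of x] assms(2)[of x] by (cases "E x") auto
qed

lemma conj_fun_neq_MInf:
  assumes "proper_fun E"
  shows "conj_fun E \<mu> \<noteq> -\<infinity>"
proof -
  obtain x v where "E x = ereal v"
    using assms by (rule proper_fun_finite_value)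
  then show ?thesis
    using conj_fun_ge[of E x v \<mu>] by auto
qed

lemma conj_fun_add_le:
  assumes P1: "proper_fun E1" and P2: "proper_fun E2"
    and bound: "\<And>x y v w. E1 x = ereal v \<Longrightarrow> E2 y = ereal w \<Longrightarrow>
        blinfun_apply \<nu>1 x - v + (blinfun_apply \<nu>2 y - w) \<le> c"
  shows "conj_fun E1 \<nu>1 + conj_fun E2 \<nu>2 \<le> ereal c"
proof -
  have E1_bound: "conj_fun E1 \<nu>1 \<le> ereal (c - (blinfun_apply \<nu>2 y - w))" if "E2 y = ereal w" for y w
    using bound[OF _ that] proper_fun_neq_MInf[OF P1] by (intro conj_fun_le) (simp add: algebra_simps)
  obtain y0 w0 where "E2 y0 = ereal w0"
    using P2 by (rule proper_fun_finite_value)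
  from E1_bound[OF this] obtain f1 where f1: "conj_fun E1 \<nu>1 = ereal f1"
    using conj_fun_neq_MInf[OF P1] by (cases "conj_fun E1 \<nu>1") auto
  have "conj_fun E2 \<nu>2 \<le> ereal (c - f1)"
    using E1_bound proper_fun_neq_MInf[OF P2] by (intro conj_fun_le) (simp add: f1 algebra_simps)
  then have "ereal f1 + conj_fun E2 \<nu>2 \<le> ereal f1 + ereal (c - f1)"
    by (rule add_left_mono)
  then show ?thesis
    by (simp add: f1)
qed

lemma convex_gain_set:
  fixes E1 E2 :: "'a::real_normed_vector \<Rightarrow> ereal"
  assumes P1: "proper_fun E1" and C1: "convex_fun E1" and P2: "proper_fun E2" and C2: "convex_fun E2"
  shows "convex {(x - y, b) | x y v w b. E1 x = ereal v \<and> E2 y = ereal w \<and>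
    b \<le> blinfun_apply \<mu> x + blinfun_apply \<nu> y - v - w - c}" (is "convex ?K")
  unfolding convex_alt
proof (intro ballI allI impI, elim conjE)
  fix k1 k2 and t :: real
  assume "k1 \<in> ?K" "k2 \<in> ?K" and t: "0 \<le> t" "t \<le> 1"
  then obtain x1 y1 v1 w1 b1 x2 y2 v2 w2 b2 where
    k: "k1 = (x1 - y1, b1)" "k2 = (x2 - y2, b2)"
    and fin: "E1 x1 = ereal v1" "E2 y1 = ereal w1" "E1 x2 = ereal v2" "E2 y2 = ereal w2"
    and b: "b1 \<le> blinfun_apply \<mu> x1 + blinfun_apply \<nu> y1 - v1 - w1 - c"
      "b2 \<le> blinfun_apply \<mu> x2 + blinfun_apply \<nu> y2 - v2 - w2 - c"
    by blast
  define x where "x = (1 - t) *\<^sub>R x1 + t *\<^sub>R x2"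
  define y where "y = (1 - t) *\<^sub>R y1 + t *\<^sub>R y2"
  obtain v where v: "E1 x = ereal v" "v \<le> (1 - t) * v1 + t * v2"
    unfolding x_def using convex_fun_finite_combination[OF P1 C1 fin(1,3) t] .
  obtain w where w: "E2 y = ereal w" "w \<le> (1 - t) * w1 + t * w2"
    unfolding y_def using convex_fun_finite_combination[OF P2 C2 fin(2,4) t] .
  have "blinfun_apply \<mu> x = (1 - t) * blinfun_apply \<mu> x1 + t * blinfun_apply \<mu> x2"
    "blinfun_apply \<nu> y = (1 - t) * blinfun_apply \<nu> y1 + t * blinfun_apply \<nu> y2"
    by (simp_all add: x_def y_def blinfun.add_right blinfun.scaleR_right)
  then have "(1 - t) * b1 + t * b2 \<le> blinfun_apply \<mu> x + blinfun_apply \<nu> y - v - w - c"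
    using mult_left_mono[OF b(1), of "1 - t"] mult_left_mono[OF b(2), of t] t v(2) w(2)
    by (simp add: algebra_simps)
  moreover have "(1 - t) *\<^sub>R k1 + t *\<^sub>R k2 = (x - y, (1 - t) * b1 + t * b2)"
    by (simp add: k x_def y_def algebra_simps)
  ultimately show "(1 - t) *\<^sub>R k1 + t *\<^sub>R k2 \<in> ?K"
    using v(1) w(1) by blast
qed

section \<open>Banach lattices\<close>

context
  assumes banach_lattice: "banach_lattice TYPE('a::{banach,lattice,ordered_real_vector})"
begin

lemma norm_le_norm_of_lat_abs_le: "lat_abs x \<le> lat_abs y \<Longrightarrow> norm x \<le> norm y"
  for x y :: 'a
  using banach_lattice unfolding banach_lattice_def by blast

lemma norm_mono_nonneg: "0 \<le> x \<Longrightarrow> x \<le> y \<Longrightarrow> norm x \<le> norm y"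
  for x y :: 'a
  by (rule norm_le_norm_of_lat_abs_le) (simp add: lat_abs_eq_self)

lemma norm_pos_part_le: "norm (pos_part x) \<le> norm x"
  for x :: 'a
  by (rule norm_le_norm_of_lat_abs_le) (simp add: lat_abs_eq_self pos_part_le_lat_abs)

lemma norm_neg_part_le: "norm (neg_part x) \<le> norm x"
  for x :: 'a
  by (rule norm_le_norm_of_lat_abs_le) (simp add: lat_abs_eq_self neg_part_le_lat_abs)

lemma positive_cone_functional_extension:
  fixes q :: "'a \<Rightarrow> real"
  assumes add: "\<And>a b. 0 \<le> a \<Longrightarrow> 0 \<le> b \<Longrightarrow> q (a + b) = q a + q b"
    and scale: "\<And>r a. 0 \<le> r \<Longrightarrow> 0 \<le> a \<Longrightarrow> q (r *\<^sub>R a) = r * q a"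
    and bound: "\<And>a. 0 \<le> a \<Longrightarrow> \<bar>q a\<bar> \<le> C * norm a"
  obtains F where "\<And>a. 0 \<le> a \<Longrightarrow> blinfun_apply F a = q a"
proof -
  have q_bound: "\<bar>q a\<bar> \<le> \<bar>C\<bar> * norm x" if "0 \<le> a" "norm a \<le> norm x" for a x :: 'a
  proof -
    have "\<bar>q a\<bar> \<le> C * norm a"
      using bound[OF that(1)] .
    also have "\<dots> \<le> \<bar>C\<bar> * norm x"
      using that(2) by (simp add: mult_mono)
    finally show ?thesis .
  qed
  have "\<bar>cone_extension q x\<bar> \<le> (2 * \<bar>C\<bar>) * norm x" for x
    using q_bound[of "pos_part x" x, OF pos_part_nonneg norm_pos_part_le]
      q_bound[of "neg_part x" x, OF neg_part_nonneg norm_neg_part_le]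
    unfolding cone_extension_def by linarith
  with linear_cone_extension[of q, OF add scale]
  have Blinfun_eq: "blinfun_apply (Blinfun (cone_extension q)) = cone_extension q"
    by (rule blinfun_apply_Blinfun_of_linear)
  show ?thesis
  proof (rule that)
    fix a :: 'a assume "0 \<le> a"
    then show "blinfun_apply (Blinfun (cone_extension q)) a = q a"
      using cone_extension_nonneg_eq[of q, OF add] by (simp add: Blinfun_eq)
  qed
qed

lemma blinfun_apply_le_on_order_interval:
  fixes \<delta> :: "'a \<Rightarrow>\<^sub>L real"
  assumes "\<psi> \<in> {0..\<phi>}"
  shows "blinfun_apply \<delta> \<psi> \<le> norm \<delta> * norm \<phi>"
proof -
  have "blinfun_apply \<delta> \<psi> \<le> norm \<delta> * norm \<psi>"
    using norm_blinfun[of \<delta> \<psi>] by simp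
  also have "\<dots> \<le> norm \<delta> * norm \<phi>"
    using assms norm_mono_nonneg by (simp add: mult_left_mono)
  finally show ?thesis .
qed

lemma riesz_kantorovich_upper:
  "\<psi> \<in> {0..\<phi>} \<Longrightarrow> blinfun_apply \<delta> \<psi> \<le> riesz_kantorovich \<delta> \<phi>"
  for \<delta> :: "'a \<Rightarrow>\<^sub>L real"
  unfolding riesz_kantorovich_def
  by (rule cSUP_upper) (auto intro: bdd_aboveI2 blinfun_apply_le_on_order_interval)

lemma riesz_kantorovich_least:
  "0 \<le> \<phi> \<Longrightarrow> (\<And>\<psi>. \<psi> \<in> {0..\<phi>} \<Longrightarrow> blinfun_apply \<delta> \<psi> \<le> M) \<Longrightarrow>
    riesz_kantorovich \<delta> \<phi> \<le> M"
  for \<delta> :: "'a \<Rightarrow>\<^sub>L real"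
  unfolding riesz_kantorovich_def by (rule cSUP_least) auto

lemma riesz_kantorovich_add:
  fixes \<delta> :: "'a \<Rightarrow>\<^sub>L real"
  assumes a: "0 \<le> a" and b: "0 \<le> b"
  shows "riesz_kantorovich \<delta> (a + b) = riesz_kantorovich \<delta> a + riesz_kantorovich \<delta> b"
proof (rule antisym)
  show "riesz_kantorovich \<delta> (a + b) \<le> riesz_kantorovich \<delta> a + riesz_kantorovich \<delta> b"
  proof (rule riesz_kantorovich_least)
    show "0 \<le> a + b" using a b by simp
    fix \<psi> assume \<psi>: "\<psi> \<in> {0..a + b}"
    \<comment> \<open>Riesz decomposition of \<open>\<psi>\<close> along \<open>a + b\<close>\<close>
    have "inf \<psi> a \<in> {0..a}" "\<psi> - inf \<psi> a \<in> {0..b}"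
      using \<psi> a b diff_inf_le_of_le_add[of \<psi> a b] by auto
    then have "blinfun_apply \<delta> (inf \<psi> a) + blinfun_apply \<delta> (\<psi> - inf \<psi> a)
        \<le> riesz_kantorovich \<delta> a + riesz_kantorovich \<delta> b"
      by (intro add_mono riesz_kantorovich_upper)
    then show "blinfun_apply \<delta> \<psi> \<le> riesz_kantorovich \<delta> a + riesz_kantorovich \<delta> b"
      by (simp add: blinfun.diff_right)
  qed
  have "riesz_kantorovich \<delta> a \<le> riesz_kantorovich \<delta> (a + b) - riesz_kantorovich \<delta> b"
  proof (rule riesz_kantorovich_least[OF a])
    fix \<psi>1 assume \<psi>1: "\<psi>1 \<in> {0..a}"
    have "riesz_kantorovich \<delta> b \<le> riesz_kantorovich \<delta> (a + b) - blinfun_apply \<delta> \<psi>1"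
    proof (rule riesz_kantorovich_least[OF b])
      fix \<psi>2 assume "\<psi>2 \<in> {0..b}"
      then have "blinfun_apply \<delta> (\<psi>1 + \<psi>2) \<le> riesz_kantorovich \<delta> (a + b)"
        using \<psi>1 by (intro riesz_kantorovich_upper) (auto intro: add_mono)
      then show "blinfun_apply \<delta> \<psi>2 \<le> riesz_kantorovich \<delta> (a + b) - blinfun_apply \<delta> \<psi>1"
        by (simp add: blinfun.add_right)
    qed
    then show "blinfun_apply \<delta> \<psi>1 \<le> riesz_kantorovich \<delta> (a + b) - riesz_kantorovich \<delta> b"
      by simp
  qed
  then show "riesz_kantorovich \<delta> a + riesz_kantorovich \<delta> b \<le> riesz_kantorovich \<delta> (a + b)"
    by simp
qed

lemma riesz_kantorovich_scaleR:
  fixes \<delta> :: "'a \<Rightarrow>\<^sub>L real"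
  assumes r: "0 < r" and a: "0 \<le> a"
  shows "riesz_kantorovich \<delta> (r *\<^sub>R a) = r * riesz_kantorovich \<delta> a"
proof (rule antisym)
  have ra: "0 \<le> r *\<^sub>R a"
    using r a by (simp add: scaleR_nonneg_nonneg)
  show "riesz_kantorovich \<delta> (r *\<^sub>R a) \<le> r * riesz_kantorovich \<delta> a"
  proof (rule riesz_kantorovich_least[OF ra])
    fix \<psi> assume "\<psi> \<in> {0..r *\<^sub>R a}"
    then have "\<psi> /\<^sub>R r \<in> {0..a}"
      using r by (simp add: pos_divideR_le_eq scaleR_nonneg_nonneg)
    then have "blinfun_apply \<delta> (\<psi> /\<^sub>R r) \<le> riesz_kantorovich \<delta> a"
      by (rule riesz_kantorovich_upper)
    then show "blinfun_apply \<delta> \<psi> \<le> r * riesz_kantorovich \<delta> a"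
      using r by (simp add: blinfun.scaleR_right field_simps)
  qed
  have "riesz_kantorovich \<delta> a \<le> riesz_kantorovich \<delta> (r *\<^sub>R a) / r"
  proof (rule riesz_kantorovich_least[OF a])
    fix \<psi> assume "\<psi> \<in> {0..a}"
    then have "r *\<^sub>R \<psi> \<in> {0..r *\<^sub>R a}"
      using r by (simp add: scaleR_nonneg_nonneg scaleR_le_cancel_left_pos)
    then have "blinfun_apply \<delta> (r *\<^sub>R \<psi>) \<le> riesz_kantorovich \<delta> (r *\<^sub>R a)"
      by (rule riesz_kantorovich_upper)
    then show "blinfun_apply \<delta> \<psi> \<le> riesz_kantorovich \<delta> (r *\<^sub>R a) / r"
      using r by (simp add: blinfun.scaleR_right field_simps)
  qed
  then show "r * riesz_kantorovich \<delta> a \<le> riesz_kantorovich \<delta> (r *\<^sub>R a)"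
    using r by (simp add: field_simps)
qed

lemma riesz_kantorovich_is_dual_sup:
  fixes \<delta> :: "'a \<Rightarrow>\<^sub>L real"
  obtains P where "dual_le \<delta> P" "dual_le 0 P" "\<And>q. dual_le \<delta> q \<Longrightarrow> dual_le 0 q \<Longrightarrow> dual_le P q"
proof -
  have nonneg: "0 \<le> riesz_kantorovich \<delta> \<phi>" if "0 \<le> \<phi>" for \<phi>
    using riesz_kantorovich_upper[of 0 \<phi> \<delta>] that by simp
  have bound: "\<bar>riesz_kantorovich \<delta> \<phi>\<bar> \<le> norm \<delta> * norm \<phi>" if "0 \<le> \<phi>" for \<phi>
    using nonneg[OF that] riesz_kantorovich_least[OF that blinfun_apply_le_on_order_interval] by simp
  have scale: "riesz_kantorovich \<delta> (r *\<^sub>R a) = r * riesz_kantorovich \<delta> a" if "0 \<le> r" "0 \<le> a" for r a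
    using that riesz_kantorovich_scaleR[of r a \<delta>] riesz_kantorovich_add[of 0 0 \<delta>]
    by (cases "r = 0") auto
  obtain P where P: "\<And>\<phi>. 0 \<le> \<phi> \<Longrightarrow> blinfun_apply P \<phi> = riesz_kantorovich \<delta> \<phi>"
    using positive_cone_functional_extension[OF riesz_kantorovich_add scale bound] by blast
  show ?thesis
  proof
    show "dual_le \<delta> P" "dual_le 0 P"
      unfolding dual_le_def using P nonneg riesz_kantorovich_upper by auto
    show "dual_le P q" if q: "dual_le \<delta> q" "dual_le 0 q" for q
      unfolding dual_le_def
    proof (intro allI impI)
      fix \<phi> :: 'a assume \<phi>: "0 \<le> \<phi>"
      have "blinfun_apply \<delta> \<psi> \<le> blinfun_apply q \<phi>" if "\<psi> \<in> {0..\<phi>}" for \<psi>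
      proof -
        have "blinfun_apply \<delta> \<psi> \<le> blinfun_apply q \<psi>" "0 \<le> blinfun_apply q (\<phi> - \<psi>)"
          using q that unfolding dual_le_def by auto
        then show ?thesis
          by (simp add: blinfun.diff_right)
      qed
      then show "blinfun_apply P \<phi> \<le> blinfun_apply q \<phi>"
        using P[OF \<phi>] riesz_kantorovich_least[OF \<phi>] by simp
    qed
  qed
qed

lemma
  fixes \<delta> :: "'a \<Rightarrow>\<^sub>L real"
  shows dual_le_dual_pos: "dual_le \<delta> (dual_pos \<delta>)"
    and dual_pos_nonneg: "dual_le 0 (dual_pos \<delta>)"
    and dual_pos_least: "dual_le \<delta> q \<Longrightarrow> dual_le 0 q \<Longrightarrow> dual_le (dual_pos \<delta>) q"
proof -
  obtain P where "dual_le \<delta> P" "dual_le 0 P" "\<And>q. dual_le \<delta> q \<Longrightarrow> dual_le 0 q \<Longrightarrow> dual_le P q"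
    using riesz_kantorovich_is_dual_sup[of \<delta>] by blast
  then have "\<exists>!P. dual_le \<delta> P \<and> dual_le 0 P \<and> (\<forall>q. dual_le \<delta> q \<and> dual_le 0 q \<longrightarrow> dual_le P q)"
    by (blast intro: dual_le_antisym)
  then have "dual_le \<delta> (dual_pos \<delta>) \<and> dual_le 0 (dual_pos \<delta>) \<and>
      (\<forall>q. dual_le \<delta> q \<and> dual_le 0 q \<longrightarrow> dual_le (dual_pos \<delta>) q)"
    unfolding dual_pos_def by (rule theI')
  then show "dual_le \<delta> (dual_pos \<delta>)" "dual_le 0 (dual_pos \<delta>)"
    and "dual_le \<delta> q \<Longrightarrow> dual_le 0 q \<Longrightarrow> dual_le (dual_pos \<delta>) q"
    by blast+
qed

lemma dual_pos_le_add_dual_pos_uminus: "dual_le (dual_pos \<delta>) (\<delta> + dual_pos (- \<delta>))"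
  for \<delta> :: "'a \<Rightarrow>\<^sub>L real"
proof (rule dual_pos_least)
  show "dual_le \<delta> (\<delta> + dual_pos (- \<delta>))" "dual_le 0 (\<delta> + dual_pos (- \<delta>))"
    using dual_pos_nonneg[of "- \<delta>"] dual_le_dual_pos[of "- \<delta>"]
    unfolding dual_le_def by (auto simp: blinfun.add_left blinfun.minus_left)
qed

lemma apply_le_of_dual_interval:
  fixes t \<delta> :: "'a \<Rightarrow>\<^sub>L real"
  assumes "dual_le 0 t" "dual_le t (dual_pos \<delta>)"
  shows "blinfun_apply t z \<le> blinfun_apply \<delta> (pos_part z) + blinfun_apply (dual_pos (- \<delta>)) (pos_part z)"
proof -
  have "blinfun_apply t z = blinfun_apply t (pos_part z) - blinfun_apply t (neg_part z)"
    unfolding blinfun.diff_right[symmetric] pos_part_minus_neg_part ..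
  also have "\<dots> \<le> blinfun_apply t (pos_part z)"
    using assms(1) unfolding dual_le_def by simp
  also have "\<dots> \<le> blinfun_apply (dual_pos \<delta>) (pos_part z)"
    using assms(2) unfolding dual_le_def by simp
  also have "\<dots> \<le> blinfun_apply (\<delta> + dual_pos (- \<delta>)) (pos_part z)"
    using dual_pos_le_add_dual_pos_uminus unfolding dual_le_def by simp
  finally show ?thesis
    by (simp add: blinfun.add_left)
qed

lemma functional_below_dual_pos_part:
  fixes N :: "'a \<Rightarrow>\<^sub>L real"
  assumes N: "dual_le 0 N" and f: "linear f" "\<And>x. f x \<le> blinfun_apply N (pos_part x)"
  obtains t where "blinfun_apply t = f" "dual_le 0 t" "dual_le t N"
proof
  have N_bound: "blinfun_apply N (pos_part y) \<le> norm N * norm y" for y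
  proof -
    have "blinfun_apply N (pos_part y) \<le> norm N * norm (pos_part y)"
      using norm_blinfun[of N "pos_part y"] by simp
    also have "\<dots> \<le> norm N * norm y"
      using norm_pos_part_le[of y] by (simp add: mult_left_mono)
    finally show ?thesis .
  qed
  have "\<bar>f x\<bar> \<le> norm N * norm x" for x
    using f(2)[of x] f(2)[of "- x"] N_bound[of x] N_bound[of "- x"] linear_neg[OF f(1), of x]
    by (simp add: abs_le_iff)
  with f(1) show Blinfun_f: "blinfun_apply (Blinfun f) = f"
    by (rule blinfun_apply_Blinfun_of_linear)
  have "0 \<le> f \<phi>" if "0 \<le> \<phi>" for \<phi>
    using f(2)[of "- \<phi>"] linear_neg[OF f(1), of \<phi>] that by (simp add: pos_part_eq_0)
  then show "dual_le 0 (Blinfun f)"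
    unfolding dual_le_def Blinfun_f by simp
  show "dual_le (Blinfun f) N"
    unfolding dual_le_def Blinfun_f using f(2) by (metis pos_part_eq_self)
qed

lemma P_rel_gain_bound:
  fixes E1 E2 :: "'a \<Rightarrow> ereal" and \<mu>1 \<mu>2 t21 :: "'a \<Rightarrow>\<^sub>L real"
  assumes PR: "P_rel E1 E2" and P1: "proper_fun E1" and P2: "proper_fun E2"
    and t21: "dual_le 0 t21" "dual_le t21 (dual_pos (\<mu>2 - \<mu>1))"
    and c1: "conj_fun E1 \<mu>1 = ereal c1" and c2: "conj_fun E2 \<mu>2 = ereal c2"
    and x: "E1 x = ereal v" and y: "E2 y = ereal w"
  shows "blinfun_apply (\<mu>1 + t21) x + blinfun_apply (\<mu>2 - t21) y - v - w - (c1 + c2)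
    \<le> blinfun_apply (dual_pos (\<mu>1 - \<mu>2)) (pos_part (x - y))"
proof -
  define u where "u = pos_part (x - y)"
  have "E1 (inf x y) + E2 (sup x y) \<le> ereal (v + w)"
    using PR x y unfolding P_rel_def by (metis plus_ereal.simps(1))
  then obtain va wb where va: "E1 (inf x y) = ereal va" and wb: "E2 (sup x y) = ereal wb"
    and "va + wb \<le> v + w"
    using proper_fun_neq_MInf[OF P1] proper_fun_neq_MInf[OF P2]
    by (cases "E1 (inf x y)"; cases "E2 (sup x y)") auto
  moreover have "blinfun_apply \<mu>1 (inf x y) - va \<le> c1" "blinfun_apply \<mu>2 (sup x y) - wb \<le> c2"
    using conj_fun_ge[of E1 "inf x y" va \<mu>1, OF va] conj_fun_ge[of E2 "sup x y" wb \<mu>2, OF wb] c1 c2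
    by simp_all
  moreover have "blinfun_apply \<mu>1 x = blinfun_apply \<mu>1 (inf x y) + blinfun_apply \<mu>1 u"
    "blinfun_apply \<mu>2 (sup x y) = blinfun_apply \<mu>2 y + blinfun_apply \<mu>2 u"
    using arg_cong[OF diff_inf_eq_pos_part[of x y, folded u_def], of "blinfun_apply \<mu>1"]
      arg_cong[OF sup_eq_add_pos_part[of x y, folded u_def], of "blinfun_apply \<mu>2"]
    by (simp_all add: blinfun.add_right blinfun.diff_right)
  moreover have "blinfun_apply t21 (x - y)
      \<le> blinfun_apply \<mu>2 u - blinfun_apply \<mu>1 u + blinfun_apply (dual_pos (\<mu>1 - \<mu>2)) u"
    using apply_le_of_dual_interval[OF t21, of "x - y"] by (simp add: u_def blinfun.diff_left)
  ultimately show ?thesis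
    unfolding u_def by (simp add: blinfun.add_left blinfun.diff_left blinfun.diff_right)
qed

lemma exchange_functional_exists:
  fixes E1 E2 :: "'a \<Rightarrow> ereal" and \<mu>1 \<mu>2 t21 :: "'a \<Rightarrow>\<^sub>L real"
  assumes P1: "proper_fun E1" and C1: "convex_fun E1" and P2: "proper_fun E2" and C2: "convex_fun E2"
    and PR: "P_rel E1 E2"
    and t21: "dual_le 0 t21" "dual_le t21 (dual_pos (\<mu>2 - \<mu>1))"
    and c1: "conj_fun E1 \<mu>1 = ereal c1" and c2: "conj_fun E2 \<mu>2 = ereal c2"
  obtains t12 where "dual_le 0 t12" "dual_le t12 (dual_pos (\<mu>1 - \<mu>2))"
    "\<And>x y v w. E1 x = ereal v \<Longrightarrow> E2 y = ereal w \<Longrightarrow>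
      blinfun_apply (\<mu>1 + t21) x + blinfun_apply (\<mu>2 - t21) y - v - w - (c1 + c2)
        \<le> blinfun_apply t12 (x - y)"
proof -
  define N where "N = dual_pos (\<mu>1 - \<mu>2)"
  define K where "K = {(x - y, b) | x y v w b. E1 x = ereal v \<and> E2 y = ereal w \<and>
    b \<le> blinfun_apply (\<mu>1 + t21) x + blinfun_apply (\<mu>2 - t21) y - v - w - (c1 + c2)}"
  have N: "dual_le 0 N"
    unfolding N_def by (rule dual_pos_nonneg)
  have "convex K"
    unfolding K_def by (rule convex_gain_set[OF P1 C1 P2 C2])
  moreover have "K \<noteq> {}"
  proof -
    obtain x0 v0 where "E1 x0 = ereal v0"
      using P1 by (rule proper_fun_finite_value)
    moreover obtain y0 w0 where "E2 y0 = ereal w0"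
      using P2 by (rule proper_fun_finite_value)
    ultimately show ?thesis
      unfolding K_def by blast
  qed
  moreover have "b \<le> blinfun_apply N (pos_part z)" if "(z, b) \<in> K" for z b
    using that P_rel_gain_bound[OF PR P1 P2 t21 c1 c2] unfolding K_def N_def by force
  ultimately obtain f where f: "linear f" "\<And>x. f x \<le> blinfun_apply N (pos_part x)"
    and f_K: "\<And>z b. (z, b) \<in> K \<Longrightarrow> b \<le> f z"
    using sublinear_sandwich[OF sublinear_pos_part_functional[OF N]] by metis
  obtain t12 where t12: "blinfun_apply t12 = f" "dual_le 0 t12" "dual_le t12 N"
    using N f by (rule functional_below_dual_pos_part)
  have "blinfun_apply (\<mu>1 + t21) x + blinfun_apply (\<mu>2 - t21) y - v - w - (c1 + c2)
      \<le> blinfun_apply t12 (x - y)" if "E1 x = ereal v" "E2 y = ereal w" for x y v w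
    using f_K[of "x - y"] that t12(1) unfolding K_def by blast
  with t12(2,3) show ?thesis
    unfolding N_def by (rule that)
qed

lemma Q_rel_conj_fun:
  fixes E1 E2 :: "'a \<Rightarrow> ereal"
  assumes P1: "proper_fun E1" and C1: "convex_fun E1" and P2: "proper_fun E2" and C2: "convex_fun E2"
    and PR: "P_rel E1 E2"
  shows "Q_rel (conj_fun E2) (conj_fun E1)"
  unfolding Q_rel_def
proof (intro allI impI, elim conjE)
  fix \<mu>1 \<mu>2 t21 :: "'a \<Rightarrow>\<^sub>L real"
  assume t21: "dual_le 0 t21" "dual_le t21 (dual_pos (\<mu>2 - \<mu>1))"
  show "\<exists>t12. dual_le 0 t12 \<and> dual_le t12 (dual_pos (\<mu>1 - \<mu>2)) \<and>
      conj_fun E1 (\<mu>1 + t21 - t12) + conj_fun E2 (\<mu>2 - t21 + t12) \<le> conj_fun E1 \<mu>1 + conj_fun E2 \<mu>2"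
  proof (cases "conj_fun E1 \<mu>1 + conj_fun E2 \<mu>2 = \<infinity>")
    case True
    then show ?thesis
      using dual_pos_nonneg by (intro exI[of _ 0]) (auto simp: dual_le_def)
  next
    case False
    then obtain c1 c2 where c1: "conj_fun E1 \<mu>1 = ereal c1" and c2: "conj_fun E2 \<mu>2 = ereal c2"
      using conj_fun_neq_MInf[OF P1, of \<mu>1] conj_fun_neq_MInf[OF P2, of \<mu>2]
      by (cases "conj_fun E1 \<mu>1"; cases "conj_fun E2 \<mu>2") auto
    obtain t12 where t12: "dual_le 0 t12" "dual_le t12 (dual_pos (\<mu>1 - \<mu>2))"
      and gain: "\<And>x y v w. E1 x = ereal v \<Longrightarrow> E2 y = ereal w \<Longrightarrow>
        blinfun_apply (\<mu>1 + t21) x + blinfun_apply (\<mu>2 - t21) y - v - w - (c1 + c2)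
          \<le> blinfun_apply t12 (x - y)"
      using exchange_functional_exists[OF P1 C1 P2 C2 PR t21 c1 c2] by blast
    have "conj_fun E1 (\<mu>1 + t21 - t12) + conj_fun E2 (\<mu>2 - t21 + t12) \<le> ereal (c1 + c2)"
    proof (rule conj_fun_add_le[OF P1 P2])
      fix x y v w assume "E1 x = ereal v" "E2 y = ereal w"
      from gain[OF this]
      show "blinfun_apply (\<mu>1 + t21 - t12) x - v + (blinfun_apply (\<mu>2 - t21 + t12) y - w) \<le> c1 + c2"
        by (simp add: blinfun.add_left blinfun.diff_left blinfun.diff_right)
    qed
    then show ?thesis
      using t12 c1 c2 by auto
  qed
qed

end

theorem theorem2p49:
  assumes "banach_lattice TYPE('a::{banach,lattice,ordered_real_vector})"
  shows "(\<forall>E1 E2 :: 'a \<Rightarrow> ereal.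
            proper_fun E1 \<and> convex_fun E1 \<and> proper_fun E2 \<and> convex_fun E2 \<and> P_rel E1 E2
            \<longrightarrow> Q_rel (conj_fun E2) (conj_fun E1))
       \<and> (\<forall>E :: 'a \<Rightarrow> ereal.
            proper_fun E \<and> convex_fun E \<and> submodular E \<longrightarrow> substitutable (conj_fun E))"
  using Q_rel_conj_fun[OF assms] unfolding submodular_def substitutable_def by blast

end
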